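(* Consider the weighted-median opinion dynamics on a row-stochastic influence matrix $W$ with node set $V=\{1,\dots,n\}$. Suppose there is a nonempty maximal cohesive set $M\ne V$. Then there exists a set $X_0\subseteq\mathbb R^n$ of positive Lebesgue measure with the following property: for every $x(0)\in X_0$ and every sequence of updating nodes, the solution never reaches a consensus state (a vector with all entries equal). One such set is $$X_0=\Big\{x\in\mathbb R^n:\ \max_{j\in M}x_j<\min_{k\in V\setminus M}x_k \ \text{ or }\ \min_{j\in M}x_j>\max_{k\in V\setminus M}x_k\Big\}.$$
   Context: A matrix $W=(w_{ij})_{n\times n}$ is row-stochastic if $w_{ij}\ge 0$ for all $i,j$ and $\sum_{j=1}^n w_{ij}=1$ for every $i$. A set $M\subseteq V$ is cohesive if $\sum_{j\in M} w_{ij}\ge 1/2$ for every $i\in M$. A cohesive set $M$ is maximal cohesive if there is no $i\in V\setminus M$ with $\sum_{j\in M} w_{ij}>1/2$. A weighted median of $x\in\mathbb R^n$ with respect to row $i$ of $W$ is any $y\in\{x_1,\dots,x_n\}$ satisfying $\sum_{j:\,x_j<y}w_{ij}\le 1/2$ and $\sum_{j:\,x_j>y}w_{ij}\le 1/2$. $\mathrm{Med}_i(x;W)$ denotes this weighted median when it is unique. When it is not unique, $\mathrm{Med}_i(x;W)$ denotes the weighted median closest to $x_i$, which is then uniquely determined. Weighted-median opinion dynamics: given $x(0)\in\mathbb R^n$, at each time step $t+1$ ($t=0,1,2,\dots$) an index $i$ is drawn uniformly at random from $\{1,\dots,n\}$, independently of the past. Then $x_i(t+1)=\mathrm{Med}_i(x(t);W)$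 and $x_j(t+1)=x_j(t)$ for $j\ne i$. *)

theory Defs
  imports "HOL-Analysis.Analysis"
begin

text \<open>Node set V = UNIV of a finite type 'n; influence matrix W :: 'n => 'n => real;
  opinion vectors x :: real^'n.\<close>

definition row_stochastic :: "('n::finite \<Rightarrow> 'n \<Rightarrow> real) \<Rightarrow> bool" where
  "row_stochastic W \<longleftrightarrow> (\<forall>i j. W i j \<ge> 0) \<and> (\<forall>i. (\<Sum>j\<in>UNIV. W i j) = 1)"

definition cohesive :: "('n::finite \<Rightarrow> 'n \<Rightarrow> real) \<Rightarrow> 'n set \<Rightarrow> bool" where
  "cohesive W M \<longleftrightarrow> (\<forall>i\<in>M. (\<Sum>j\<in>M. W i j) \<ge> 1/2)"

definition maximal_cohesive :: "('n::finite \<Rightarrow> 'n \<Rightarrow> real) \<Rightarrow> 'n set \<Rightarrow> bool" where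
  "maximal_cohesive W M \<longleftrightarrow> cohesive W M \<and> \<not> (\<exists>i\<in>UNIV - M. (\<Sum>j\<in>M. W i j) > 1/2)"

definition is_wmedian :: "('n::finite \<Rightarrow> 'n \<Rightarrow> real) \<Rightarrow> 'n \<Rightarrow> real^'n \<Rightarrow> real \<Rightarrow> bool" where
  "is_wmedian W i x y \<longleftrightarrow> y \<in> range (\<lambda>j. x $ j) \<and>
     (\<Sum>j\<in>{j. x $ j < y}. W i j) \<le> 1/2 \<and> (\<Sum>j\<in>{j. x $ j > y}. W i j) \<le> 1/2"

text \<open>Med_i(x;W): the weighted median closest to x_i (this is the unique weighted
  median when it is unique).\<close>
definition Med :: "('n::finite \<Rightarrow> 'n \<Rightarrow> real) \<Rightarrow> 'n \<Rightarrow> real^'n \<Rightarrow> real" where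
  "Med W i x = (THE y. is_wmedian W i x y \<and>
      (\<forall>z. is_wmedian W i x z \<longrightarrow> \<bar>y - x $ i\<bar> \<le> \<bar>z - x $ i\<bar>))"

primrec wm_traj :: "('n::finite \<Rightarrow> 'n \<Rightarrow> real) \<Rightarrow> real^'n \<Rightarrow> (nat \<Rightarrow> 'n) \<Rightarrow> nat \<Rightarrow> real^'n" where
  "wm_traj W x0 \<sigma> 0 = x0"
| "wm_traj W x0 \<sigma> (Suc t) =
     (let x = wm_traj W x0 \<sigma> t in (\<chi> k. if k = \<sigma> t then Med W (\<sigma> t) x else x $ k))"

definition consensus :: "real^'n \<Rightarrow> bool" where
  "consensus x \<longleftrightarrow> (\<forall>i j. x $ i = x $ j)"

end

theory Submission
  imports Defs
begin

text \<open>Maximality of \<open>M\<close> means that \<open>M\<close> and its complement are both cohesive. If every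
  opinion in \<open>M\<close> lies strictly below every opinion outside \<open>M\<close>, an agent of \<open>M\<close> puts
  weight at least 1/2 on opinions not exceeding the largest opinion in \<open>M\<close>, so its closest
  weighted median does not exceed it either; by the symmetry \<open>x \<mapsto> -x\<close> the same holds for
  agents outside \<open>M\<close>. Hence this separation, and its mirror image, is invariant, which
  rules out consensus. Both separated configurations form nonempty open sets, so
  \<open>X0\<close> has positive Lebesgue measure.\<close>

lemma row_stochastic_sum_mono:
  "row_stochastic W \<Longrightarrow> A \<subseteq> B \<Longrightarrow> (\<Sum>j\<in>A. W i j) \<le> (\<Sum>j\<in>B. W i j)"
  by (rule sum_mono2) (auto simp: row_stochastic_def)

lemma row_stochastic_sum_Compl:
  assumes "row_stochastic W"
  shows "(\<Sum>j\<in>-A. W i j) = 1 - (\<Sum>j\<in>A. W i j)"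
proof -
  have "(\<Sum>j\<in>UNIV. W i j) = (\<Sum>j\<in>-A. W i j) + (\<Sum>j\<in>A. W i j)"
    by (subst sum.subset_diff[of A]) (auto simp: Compl_eq_Diff_UNIV)
  with assms show ?thesis by (simp add: row_stochastic_def)
qed

lemma maximal_cohesive_imp_cohesive_Compl:
  assumes "row_stochastic W" and "maximal_cohesive W M"
  shows "cohesive W (-M)"
  using assms row_stochastic_sum_Compl[OF assms(1), where A=M]
  by (auto simp: maximal_cohesive_def cohesive_def not_less)

lemma down_closed_eq_atMost_value:
  fixes x :: "real^'n::finite"
  assumes "{j. P (x$j)} \<noteq> {}" and down: "\<And>u v. P v \<Longrightarrow> u \<le> v \<Longrightarrow> P u"
  shows "\<exists>v\<in>range (($) x). P v \<and> {j. x$j \<le> v} = {j. P (x$j)}"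
proof -
  define v where "v = Max ((($) x) ` {j. P (x$j)})"
  have v: "v \<in> ((($) x) ` {j. P (x$j)})"
    unfolding v_def using assms(1) by (intro Max_in) auto
  have "x$j \<le> v" if "P (x$j)" for j
    unfolding v_def using that by (intro Max_ge) auto
  with v down show ?thesis by (intro bexI[of _ v]) auto
qed

lemma wmedian_exists_le:
  assumes rs: "row_stochastic W" and half: "1/2 \<le> (\<Sum>j\<in>{j. x$j \<le> c}. W i j)"
  shows "\<exists>y. is_wmedian W i x y \<and> y \<le> c"
proof -
  define V where "V = {v \<in> range (($) x). 1/2 \<le> (\<Sum>j\<in>{j. x$j \<le> v}. W i j)}"
  have "{j. x$j \<le> c} \<noteq> {}"
    using half by (intro notI) simp
  then obtain v0 where v0: "v0 \<in> range (($) x)" "v0 \<le> c" "{j. x$j \<le> v0} = {j. x$j \<le> c}"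
    using down_closed_eq_atMost_value[of "\<lambda>u. u \<le> c" x] by auto
  with half have "v0 \<in> V"
    by (simp add: V_def)
  define y where "y = Min V"
  have finV: "finite V"
    unfolding V_def by simp
  have "y \<in> V" "y \<le> v0"
    using \<open>v0 \<in> V\<close> finV unfolding y_def by (auto intro: Min_in Min_le)
  have upper: "(\<Sum>j\<in>{j. y < x$j}. W i j) \<le> 1/2"
  proof -
    have "{j. y < x$j} = -{j. x$j \<le> y}"
      by auto
    with \<open>y \<in> V\<close> show ?thesis
      by (simp add: V_def row_stochastic_sum_Compl[OF rs])
  qed
  have lower: "(\<Sum>j\<in>{j. x$j < y}. W i j) \<le> 1/2"
  proof (rule ccontr)
    assume heavy: "\<not> ?thesis"
    then have "{j. x$j < y} \<noteq> {}"
      by (intro notI) simp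
    then obtain v where "v \<in> range (($) x)" "v < y" "{j. x$j \<le> v} = {j. x$j < y}"
      using down_closed_eq_atMost_value[of "\<lambda>u. u < y" x] by auto
    with heavy have "v \<in> V" "v < Min V"
      by (auto simp: V_def y_def)
    with finV show False
      by (meson Min_le not_le)
  qed
  show ?thesis
    using \<open>y \<in> V\<close> \<open>y \<le> v0\<close> v0 upper lower
    by (intro exI[of _ y]) (auto simp: is_wmedian_def V_def)
qed

lemma wmedian_between:
  assumes rs: "row_stochastic W" and "is_wmedian W i x y1" "is_wmedian W i x y2"
    and "y1 \<le> v" "v \<le> y2" "v \<in> range (($) x)"
  shows "is_wmedian W i x v"
proof -
  have "(\<Sum>j\<in>{j. x$j < v}. W i j) \<le> (\<Sum>j\<in>{j. x$j < y2}. W i j)"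
    "(\<Sum>j\<in>{j. v < x$j}. W i j) \<le> (\<Sum>j\<in>{j. y1 < x$j}. W i j)"
    using assms by (auto intro!: row_stochastic_sum_mono[OF rs])
  with assms show ?thesis
    by (auto simp: is_wmedian_def)
qed

definition closest_wmedian :: "('n::finite \<Rightarrow> 'n \<Rightarrow> real) \<Rightarrow> 'n \<Rightarrow> real^'n \<Rightarrow> real \<Rightarrow> bool" where
  "closest_wmedian W i x y \<longleftrightarrow> is_wmedian W i x y \<and>
      (\<forall>z. is_wmedian W i x z \<longrightarrow> \<bar>y - x$i\<bar> \<le> \<bar>z - x$i\<bar>)"

lemma closest_wmedian_unique:
  assumes rs: "row_stochastic W" and y1: "closest_wmedian W i x y1" and y2: "closest_wmedian W i x y2"
  shows "y1 = y2"
proof (rule ccontr)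
  assume ne: "y1 \<noteq> y2"
  have m1: "is_wmedian W i x y1" and m2: "is_wmedian W i x y2"
    and eq: "\<bar>y1 - x$i\<bar> = \<bar>y2 - x$i\<bar>"
    using y1 y2 by (auto simp: closest_wmedian_def intro: antisym)
  \<comment> \<open>two distinct medians equally close to \<open>x$i\<close> lie on opposite sides of it\<close>
  then have "min y1 y2 \<le> x$i" "x$i \<le> max y1 y2"
    using ne by (auto simp: abs_if split: if_splits)
  then have "is_wmedian W i x (x$i)"
    using wmedian_between[OF rs m1 m2] wmedian_between[OF rs m2 m1] by (cases "y1 \<le> y2") auto
  with y1 have "y1 = x$i"
    by (fastforce simp: closest_wmedian_def)
  with eq ne show False
    by auto
qed

lemma closest_wmedian_exists:
  assumes "row_stochastic W"
  shows "\<exists>y. closest_wmedian W i x y"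
proof -
  define S where "S = {y. is_wmedian W i x y}"
  have "finite S"
    unfolding S_def by (rule finite_subset[of _ "range (($) x)"]) (auto simp: is_wmedian_def)
  moreover have "S \<noteq> {}"
  proof -
    have "{j. x$j \<le> Max (range (($) x))} = UNIV"
      by simp
    with assms have "1/2 \<le> (\<Sum>j\<in>{j. x$j \<le> Max (range (($) x))}. W i j)"
      by (simp add: row_stochastic_def)
    from wmedian_exists_le[OF assms this] show ?thesis
      by (auto simp: S_def)
  qed
  ultimately obtain y where "is_arg_min (\<lambda>y. \<bar>y - x$i\<bar>) (\<lambda>y. y \<in> S) y"
    using ex_is_arg_min_if_finite by blast
  then show ?thesis
    by (auto simp: closest_wmedian_def is_arg_min_linorder S_def)
qed

lemma closest_wmedian_Med:
  assumes "row_stochastic W"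
  shows "closest_wmedian W i x (Med W i x)"
proof -
  obtain y where y: "closest_wmedian W i x y"
    using closest_wmedian_exists[OF assms] by blast
  have "closest_wmedian W i x (THE y. closest_wmedian W i x y)"
    using closest_wmedian_unique[OF assms _ y] by (rule theI[where P="closest_wmedian W i x", OF y])
  then show ?thesis
    unfolding Med_def closest_wmedian_def .
qed

lemma Med_le:
  assumes rs: "row_stochastic W" and "x$i \<le> c" and "1/2 \<le> (\<Sum>j\<in>{j. x$j \<le> c}. W i j)"
  shows "Med W i x \<le> c"
proof (rule ccontr)
  assume "\<not> Med W i x \<le> c"
  have closest: "closest_wmedian W i x (Med W i x)"
    by (rule closest_wmedian_Med[OF rs])
  obtain y where y: "is_wmedian W i x y" "y \<le> c"
    using wmedian_exists_le[OF rs assms(3)] by blast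
  \<comment> \<open>\<open>max y (x$i)\<close> is a median strictly closer to \<open>x$i\<close> than \<open>Med W i x\<close>\<close>
  have "is_wmedian W i x (max y (x$i))"
  proof (cases "y \<le> x$i")
    case True
    with closest y \<open>\<not> Med W i x \<le> c\<close> \<open>x$i \<le> c\<close> show ?thesis
      by (auto simp: closest_wmedian_def max_def intro: wmedian_between[OF rs y(1)])
  qed (use y in \<open>simp add: max_def\<close>)
  with closest have "\<bar>Med W i x - x$i\<bar> \<le> \<bar>max y (x$i) - x$i\<bar>"
    unfolding closest_wmedian_def by blast
  with y \<open>\<not> Med W i x \<le> c\<close> \<open>x$i \<le> c\<close> show False
    by (auto simp: max_def split: if_splits)
qed

lemma is_wmedian_uminus: "is_wmedian W i (-x) y \<longleftrightarrow> is_wmedian W i x (-y)"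
proof -
  have "y \<in> range (($) (-x)) \<longleftrightarrow> -y \<in> range (($) x)"
    by (auto simp: image_iff) (metis minus_minus)+
  moreover have "{j. (-x)$j < y} = {j. -y < x$j}" "{j. y < (-x)$j} = {j. x$j < -y}"
    by auto
  ultimately show ?thesis
    unfolding is_wmedian_def by auto
qed

lemma Med_uminus:
  assumes "row_stochastic W"
  shows "Med W i (-x) = - Med W i x"
proof -
  have "closest_wmedian W i (-x) (- Med W i x)"
    using closest_wmedian_Med[OF assms, of i x]
    by (auto simp: closest_wmedian_def is_wmedian_uminus abs_minus_commute)
  then show ?thesis
    using closest_wmedian_unique[OF assms closest_wmedian_Med[OF assms]] by blast
qed

definition median_update :: "('n::finite \<Rightarrow> 'n \<Rightarrow> real) \<Rightarrow> 'n \<Rightarrow> real^'n \<Rightarrow> real^'n" where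
  "median_update W i x = (\<chi> k. if k = i then Med W i x else x$k)"

lemma wm_traj_Suc_median_update:
  "wm_traj W x0 \<sigma> (Suc t) = median_update W (\<sigma> t) (wm_traj W x0 \<sigma> t)"
  by (simp add: median_update_def Let_def)

lemma median_update_uminus:
  "row_stochastic W \<Longrightarrow> median_update W i (-x) = - median_update W i x"
  by (simp add: median_update_def Med_uminus vec_eq_iff)

definition separated :: "'n::finite set \<Rightarrow> real^'n \<Rightarrow> bool" where
  "separated A x \<longleftrightarrow> (\<forall>j\<in>A. \<forall>k\<in>-A. x$j < x$k)"

lemma separated_uminus: "separated (-A) (-x) \<longleftrightarrow> separated A x"
  by (auto simp: separated_def)

lemma separated_median_update_mem:
  assumes rs: "row_stochastic W" and "cohesive W A" and sep: "separated A x" and "i \<in> A"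
  shows "separated A (median_update W i x)"
proof -
  define c where "c = Max ((($) x) ` A)"
  have below: "x$j \<le> c" if "j \<in> A" for j
    unfolding c_def using that by (intro Max_ge) auto
  have above: "c < x$k" if "k \<in> -A" for k
    unfolding c_def using sep that \<open>i \<in> A\<close> by (subst Max_less_iff) (auto simp: separated_def)
  have "1/2 \<le> (\<Sum>j\<in>A. W i j)"
    using assms by (simp add: cohesive_def)
  also have "\<dots> \<le> (\<Sum>j\<in>{j. x$j \<le> c}. W i j)"
    using below by (intro row_stochastic_sum_mono[OF rs]) auto
  finally have "Med W i x \<le> c"
    using Med_le[OF rs below[OF \<open>i \<in> A\<close>]] by blast
  with below above \<open>i \<in> A\<close> show ?thesis
    by (fastforce simp: separated_def median_update_def)
qed

lemma separated_median_update:
  assumes rs: "row_stochastic W" and "cohesive W A" "cohesive W (-A)" and "separated A x"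
  shows "separated A (median_update W i x)"
proof (cases "i \<in> A")
  case True
  with assms show ?thesis
    by (blast intro: separated_median_update_mem)
next
  case False
  \<comment> \<open>negating all opinions swaps the roles of \<open>A\<close> and \<open>-A\<close>\<close>
  with assms have "separated (-A) (median_update W i (-x))"
    by (intro separated_median_update_mem) (auto simp: separated_uminus)
  then show ?thesis
    by (simp add: median_update_uminus[OF rs] separated_uminus)
qed

lemma separated_wm_traj:
  assumes "row_stochastic W" "cohesive W A" "cohesive W (-A)" "separated A x0"
  shows "separated A (wm_traj W x0 \<sigma> t)"
  by (induction t)
    (simp_all add: assms wm_traj_Suc_median_update separated_median_update del: wm_traj.simps(2))

lemma not_consensus_if_separated:
  assumes "separated A x" "A \<noteq> {}" "A \<noteq> UNIV"
  shows "\<not> consensus x"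
proof -
  obtain j k where "j \<in> A" "k \<in> -A"
    using assms(2,3) by blast
  with assms(1) have "x$j < x$k"
    by (simp add: separated_def)
  then show ?thesis
    unfolding consensus_def by (metis less_irrefl)
qed

lemma Max_less_Min_iff_separated:
  fixes x :: "real^'n::finite"
  assumes "A \<noteq> {}" "A \<noteq> UNIV"
  shows "Max ((($) x) ` A) < Min ((($) x) ` (UNIV - A)) \<longleftrightarrow> separated A x"
proof -
  have "(($) x) ` A \<noteq> {}" "(($) x) ` (UNIV - A) \<noteq> {}"
    using assms by auto
  then show ?thesis
    by (auto simp: Max_less_iff Min_gr_iff separated_def Compl_eq_Diff_UNIV)
qed

lemma separation_gap_set_eq:
  fixes M :: "'n::finite set"
  assumes "M \<noteq> {}" "M \<noteq> UNIV"
  shows "{x :: real^'n. Max ((($) x) ` M) < Min ((($) x) ` (UNIV - M))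
            \<or> Max ((($) x) ` (UNIV - M)) < Min ((($) x) ` M)}
       = {x. separated M x} \<union> {x. separated (-M) x}"
proof -
  have "-M \<noteq> {}" "-M \<noteq> UNIV"
    using assms by auto
  from Max_less_Min_iff_separated[OF this]
  have "Max ((($) x) ` (UNIV - M)) < Min ((($) x) ` M) \<longleftrightarrow> separated (-M) x" for x :: "real^'n"
    by (simp add: Compl_eq_Diff_UNIV[symmetric])
  then show ?thesis
    unfolding Max_less_Min_iff_separated[OF assms] by auto
qed

lemma not_consensus_wm_traj:
  assumes "row_stochastic W" "maximal_cohesive W M" "M \<noteq> {}" "M \<noteq> UNIV"
    and "separated M x0 \<or> separated (-M) x0"
  shows "\<not> consensus (wm_traj W x0 \<sigma> t)"
proof -
  have "cohesive W M" "cohesive W (-M)"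
    using assms(1,2) maximal_cohesive_imp_cohesive_Compl by (auto simp: maximal_cohesive_def)
  obtain A where A: "A = M \<or> A = -M" and "separated A x0"
    using assms(5) by blast
  with assms(1) \<open>cohesive W M\<close> \<open>cohesive W (-M)\<close> have "separated A (wm_traj W x0 \<sigma> t)"
    by (auto intro: separated_wm_traj)
  moreover have "A \<noteq> {}" "A \<noteq> UNIV"
    using A assms(3,4) by auto
  ultimately show ?thesis
    by (rule not_consensus_if_separated)
qed

lemma open_separated: "open {x. separated A x}"
proof -
  have "{x. separated A x} = (\<Inter>j\<in>A. \<Inter>k\<in>-A. {x. x$j < x$k})"
    by (auto simp: separated_def)
  then show ?thesis
    by (auto intro!: open_INT open_Collect_less continuous_intros)
qed

lemma emeasure_lebesgue_open_pos:
  fixes S :: "'a::euclidean_space set"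
  assumes "open S" "S \<noteq> {}"
  shows "0 < emeasure lebesgue S"
proof -
  obtain x where "x \<in> S"
    using assms(2) by blast
  with \<open>open S\<close> obtain e where "0 < e" "ball x e \<subseteq> S"
    by (rule openE)
  then obtain a b where box: "x \<in> box a b" "box a b \<subseteq> S"
    using rational_boxes[OF \<open>0 < e\<close>, of x] by blast
  then have ab: "\<forall>i\<in>Basis. a \<bullet> i < b \<bullet> i"
    by (metis box_ne_empty(2) empty_iff)
  then have "0 < emeasure lborel (box a b)"
    by (simp add: emeasure_lborel_box less_imp_le inner_diff_left prod_pos)
  also have "\<dots> \<le> emeasure lebesgue S"
    using box \<open>open S\<close> by (simp add: emeasure_mono)
  finally show ?thesis .
qed

theorem mainTheorem9:
  fixes W :: "'n::finite \<Rightarrow> 'n \<Rightarrow> real" and M :: "'n set"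
  assumes "row_stochastic W"
    and "maximal_cohesive W M"
    and "M \<noteq> {}"
    and "M \<noteq> UNIV"
  defines "X0 \<equiv> {x :: real^'n.
      Max ((\<lambda>j. x $ j) ` M) < Min ((\<lambda>k. x $ k) ` (UNIV - M))
    \<or> Min ((\<lambda>j. x $ j) ` M) > Max ((\<lambda>k. x $ k) ` (UNIV - M))}"
  shows "(\<exists>X. X \<in> sets lebesgue \<and> emeasure lebesgue X > 0 \<and>
            (\<forall>x0\<in>X. \<forall>\<sigma> :: nat \<Rightarrow> 'n. \<forall>t. \<not> consensus (wm_traj W x0 \<sigma> t)))
       \<and> X0 \<in> sets lebesgue \<and> emeasure lebesgue X0 > 0
       \<and> (\<forall>x0\<in>X0. \<forall>\<sigma> :: nat \<Rightarrow> 'n. \<forall>t. \<not> consensus (wm_traj W x0 \<sigma> t))"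
proof -
  have X0_eq: "X0 = {x. separated M x} \<union> {x. separated (-M) x}"
    unfolding X0_def using separation_gap_set_eq[OF assms(3,4)] by simp
  have "open X0"
    by (simp add: X0_eq open_Un open_separated)
  then have "X0 \<in> sets lebesgue"
    by (simp add: borel_open)
  moreover have "(\<chi> j. if j \<in> M then 0 else 1) \<in> X0"
    by (simp add: X0_eq separated_def)
  with \<open>open X0\<close> have "0 < emeasure lebesgue X0"
    by (intro emeasure_lebesgue_open_pos) auto
  moreover have "\<forall>x0\<in>X0. \<forall>\<sigma> t. \<not> consensus (wm_traj W x0 \<sigma> t)"
    using not_consensus_wm_traj[OF assms(1-4)] by (simp add: X0_eq)
  ultimately show ?thesis
    by blast
qed

end
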